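(* Let $a<0$, $b<0$, $c>0$, $d<0$ with $a+bd>0$, consider $$Z_0=\begin{cases}X=(a,0,b(y+x^2)) & z\ge0,\\ Y=(c,d,x)& z\le0,\end{cases}$$ and let $\Sigma^{c+}=\{(x,y,0)\,:\,b(y+x^2)>0,\ x>0\}=\{(x,y,0)\,:\,x>0,\ y<-x^2\}$. Let $\varphi$ be the first return map $$\varphi(x,y)=\left(\frac{ax-\sqrt{-3a^2(x^2+4y)}}{2a},\ y+\frac{d\big(ax-\sqrt{-3a^2(x^2+4y)}\big)}{ac}\right).$$ Then $$\varphi(\Sigma^{c+})\subset\Big\{(x,y,0)\in\Sigma\,:\,-\tfrac{x^2}{3}+2\tfrac{d}{c}x<y<-\tfrac{x^2}{4}+2\tfrac{d}{c}x,\ x>0\Big\}.$$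
   Context: $\Sigma=\{z=0\}$, points identified with $(x,y)$ or $(x,y,0)$. The first return map $\varphi$ sends a point $p$ of $\Sigma$ to the point obtained by following the trajectory of $X$ from $p$ until it returns to $\Sigma$, and then following the trajectory of $Y$ from there until it returns to $\Sigma$; the displayed formula is its explicit expression. *)

theory Defs
  imports Complex_Main
begin

text \<open>Points of the section Sigma = {z = 0} are identified with pairs (x,y).\<close>

definition Sigma_cplus :: "real \<Rightarrow> (real \<times> real) set" where
  "Sigma_cplus b = {(x, y). b * (y + x^2) > 0 \<and> x > 0}"

definition first_return :: "real \<Rightarrow> real \<Rightarrow> real \<Rightarrow> real \<times> real \<Rightarrow> real \<times> real" where
  "first_return a c d p = (case p of (x, y) \<Rightarrow>
     ((a * x - sqrt (- 3 * a^2 * (x^2 + 4 * y))) / (2 * a),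
      y + d * (a * x - sqrt (- 3 * a^2 * (x^2 + 4 * y))) / (a * c)))"

end

theory Submission
  imports Defs
begin

text \<open>Put \<open>S = sqrt (-3 (x\<^sup>2 + 4y))\<close>. The return map sends \<open>(x, y)\<close> to
  \<open>(X, y + 2 (d/c) X)\<close> with \<open>X = (x + S)/2\<close>, so after the shear the claim is
  \<open>-X\<^sup>2/3 < y < -X\<^sup>2/4\<close>. Since \<open>y = -(S\<^sup>2 + 3x\<^sup>2)/12\<close>, the lower bound says \<open>S > x\<close>
  and the upper bound says \<open>(S - 3x)\<^sup>2 > 0\<close>; both follow from \<open>S > 3x\<close>, which is
  \<open>y < -x\<^sup>2\<close> in disguise.\<close>

lemma Sigma_cplus_iff:
  assumes "b < 0"
  shows "(x, y) \<in> Sigma_cplus b \<longleftrightarrow> x > 0 \<and> y + x\<^sup>2 < 0"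
  using assms by (auto simp: Sigma_cplus_def mult_less_0_iff zero_less_mult_iff)

lemma first_return_eq:
  fixes a c d x y :: real
  assumes "a < 0"
  defines "X \<equiv> (x + sqrt (-3 * (x\<^sup>2 + 4 * y))) / 2"
  shows "first_return a c d (x, y) = (X, y + 2 * (d / c) * X)"
proof -
  have "sqrt (-3 * a\<^sup>2 * (x\<^sup>2 + 4 * y)) = sqrt (a\<^sup>2) * sqrt (-3 * (x\<^sup>2 + 4 * y))"
    unfolding real_sqrt_mult[symmetric] by (simp only: ac_simps)
  also have "\<dots> = -a * sqrt (-3 * (x\<^sup>2 + 4 * y))"
    using assms(1) by simp
  finally show ?thesis
    using assms(1) by (cases "c = 0") (simp_all add: first_return_def X_def field_simps)
qed

lemma three_x_less_sqrt:
  fixes x y :: real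
  assumes "x > 0" and "y + x\<^sup>2 < 0"
  shows "3 * x < sqrt (-3 * (x\<^sup>2 + 4 * y))"
proof (rule real_less_rsqrt)
  show "(3 * x)\<^sup>2 < -3 * (x\<^sup>2 + 4 * y)"
    using assms by (simp add: power2_eq_square)
qed

lemma return_point_bounds:
  fixes x y :: real
  assumes "x > 0" and "y + x\<^sup>2 < 0"
  defines "X \<equiv> (x + sqrt (-3 * (x\<^sup>2 + 4 * y))) / 2"
  shows "X > 0" and "- X\<^sup>2 / 3 < y" and "y < - X\<^sup>2 / 4"
proof -
  define S where "S = sqrt (-3 * (x\<^sup>2 + 4 * y))"
  have S: "3 * x < S"
    unfolding S_def using assms(1,2) by (rule three_x_less_sqrt)
  have "0 \<le> -3 * (x\<^sup>2 + 4 * y)"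
    using assms(2) zero_le_power2[of x] by argo
  then have "S\<^sup>2 = -3 * (x\<^sup>2 + 4 * y)"
    unfolding S_def by (rule real_sqrt_pow2)
  then have y_eq: "y = -(S\<^sup>2 + 3 * x\<^sup>2) / 12"
    by simp
  have X_eq: "X = (x + S) / 2"
    unfolding X_def S_def ..
  show "X > 0"
    using S assms(1) by (simp add: X_eq)
  show "- X\<^sup>2 / 3 < y"
    using S assms(1) by (simp add: X_eq y_eq power2_eq_square field_simps)
  have "0 < (S - 3 * x)\<^sup>2"
    using S by simp
  then show "y < - X\<^sup>2 / 4"
    by (simp add: X_eq y_eq power2_eq_square field_simps)
qed

theorem mainTheorem5:
  fixes a b c d :: real
  assumes "a < 0" and "b < 0" and "c > 0" and "d < 0" and "a + b * d > 0"
  shows "first_return a c d ` Sigma_cplus b \<subseteq>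
    {(x, y). - (x^2) / 3 + 2 * (d / c) * x < y \<and> y < - (x^2) / 4 + 2 * (d / c) * x \<and> x > 0}"
proof (rule image_subsetI)
  fix p
  assume "p \<in> Sigma_cplus b"
  moreover obtain x y where p: "p = (x, y)"
    by fastforce
  ultimately have x: "x > 0" and y: "y + x\<^sup>2 < 0"
    using Sigma_cplus_iff[OF \<open>b < 0\<close>] by auto
  define X where "X = (x + sqrt (-3 * (x\<^sup>2 + 4 * y))) / 2"
  have "first_return a c d p = (X, y + 2 * (d / c) * X)"
    unfolding p X_def using \<open>a < 0\<close> by (rule first_return_eq)
  moreover have "X > 0" "- X\<^sup>2 / 3 < y" "y < - X\<^sup>2 / 4"
    using return_point_bounds[OF x y] by (simp_all add: X_def)
  ultimately show "first_return a c d p \<in>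
    {(x, y). - (x^2) / 3 + 2 * (d / c) * x < y \<and> y < - (x^2) / 4 + 2 * (d / c) * x \<and> x > 0}"
    by simp
qed

end
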